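(* Fix $c_0,c_1\ge 0$. Suppose that $\varepsilon=(\varepsilon_0,\varepsilon_1)=(0,0)$ with probability one. Then the estimator is incentive compatible: for every $(\beta_0,\beta_1)\in\mathbb{R}^2$ and all $x,r\in\{0,1\}$, $$\mathbb{E}_\varepsilon\big[\hat f(x)-f(x)\big]^2\le \mathbb{E}_\varepsilon\big[\hat f(r)-f(x)\big]^2 .$$
   Context: Setting: an agent has a binary characteristic $x\in\{0,1\}$ and ideal action $f(x)=\beta_0+\beta_1x$, with unknown parameters $\beta=(\beta_0,\beta_1)$. A statistician observes $y_x=f(x)+\varepsilon_x$ for $x=0,1$, where $\varepsilon_0,\varepsilon_1$ are i.i.d. with mean zero, and computes $(b_0,b_1)=(b_0(\varepsilon,\beta),b_1(\varepsilon,\beta))$ solving $\min_{b_0,b_1}\sum_{x=0,1}(y_x-b_0-b_1x)^2+c_0\mathbf{1}_{b_1\neq0}+c_1|b_1|$, breaking indifference between including ($b_1\ne 0$) and excluding ($b_1=0$) in favor of inclusion. Given the agent's report $r\in\{0,1\}$ the statistician takes the action $\hat f(r)=b_0+b_1r$; the agent's payoff is $-(\hat f(r)-f(x))^2$. The estimator is called incentive compatible if the displayed inequality holds for every $\beta$ and all $x,r\in\{0,1\}$. *)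

theory Defs
  imports "HOL-Probability.Probability"
begin

definition pen_obj :: "real \<Rightarrow> real \<Rightarrow> real \<Rightarrow> real \<Rightarrow> real \<Rightarrow> real \<Rightarrow> real" where
  "pen_obj c0 c1 y0 y1 b0 b1 =
     (y0 - b0)^2 + (y1 - b0 - b1 * 1)^2 + c0 * (if b1 \<noteq> 0 then 1 else 0) + c1 * \<bar>b1\<bar>"

definition is_minimizer :: "real \<Rightarrow> real \<Rightarrow> real \<Rightarrow> real \<Rightarrow> real \<Rightarrow> real \<Rightarrow> bool" where
  "is_minimizer c0 c1 y0 y1 b0 b1 \<longleftrightarrow>
     (\<forall>b0' b1'. pen_obj c0 c1 y0 y1 b0 b1 \<le> pen_obj c0 c1 y0 y1 b0' b1')"

text \<open>A minimizer selected with indifference broken in favour of inclusion (b1 \<noteq> 0):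
  an excluding minimizer is only selected if no including minimizer exists.\<close>
definition selected_est :: "real \<Rightarrow> real \<Rightarrow> real \<Rightarrow> real \<Rightarrow> real \<Rightarrow> real \<Rightarrow> bool" where
  "selected_est c0 c1 y0 y1 b0 b1 \<longleftrightarrow>
     is_minimizer c0 c1 y0 y1 b0 b1 \<and>
     (b1 = 0 \<longrightarrow> \<not> (\<exists>b0' b1'. b1' \<noteq> 0 \<and> is_minimizer c0 c1 y0 y1 b0' b1'))"

definition estimator :: "real \<Rightarrow> real \<Rightarrow> real \<Rightarrow> real \<Rightarrow> real \<times> real" where
  "estimator c0 c1 y0 y1 = (THE b. selected_est c0 c1 y0 y1 (fst b) (snd b))"

definition fhat :: "real \<Rightarrow> real \<Rightarrow> real \<Rightarrow> real \<Rightarrow> real \<times> real \<Rightarrow> real \<Rightarrow> real" where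
  "fhat c0 c1 beta0 beta1 e r =
     (let b = estimator c0 c1 (beta0 + beta1 * 0 + fst e) (beta0 + beta1 * 1 + snd e)
      in fst b + snd b * r)"

end

theory Submission
  imports Defs
begin

text \<open>Without noise the data are y_0 = beta_0 and y_1 = beta_0 + beta_1. For a fixed slope b_1 the
  objective is minimised by the intercept (y_0 + y_1 - b_1)/2, which splits the fitting error
  (b_1 - beta_1)/2 evenly between the two types, so the error at r differs from the error at x
  only by the sign of its slope part. Reporting truthfully is therefore optimal as soon as the
  selected slope has the sign of beta_1, which holds because replacing b_1 by -b_1 leaves the
  penalties unchanged but worsens the fit whenever beta_1 b_1 < 0. Most of the work goes into
  showing that the tie-breaking rule selects a unique minimiser, so that the definite description
  in the estimator denotes it: as a function of b_1 the objective is a strictly convex lasso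
  objective plus a jump of height c_0 away from 0.\<close>

definition lasso_obj :: "real \<Rightarrow> real \<Rightarrow> real \<Rightarrow> real" where
  "lasso_obj c1 d b = (d - b)^2 / 2 + c1 * \<bar>b\<bar>"

definition slope_obj :: "real \<Rightarrow> real \<Rightarrow> real \<Rightarrow> real \<Rightarrow> real" where
  "slope_obj c0 c1 d b = lasso_obj c1 d b + (if b \<noteq> 0 then c0 else 0)"

lemma pen_obj_profile:
  "pen_obj c0 c1 y0 y1 b0 b1 = 2 * (b0 - (y0 + y1 - b1) / 2)^2 + slope_obj c0 c1 (y1 - y0) b1"
  unfolding pen_obj_def slope_obj_def lasso_obj_def by (simp add: power2_eq_square field_simps)

lemma is_minimizer_iff:
  "is_minimizer c0 c1 y0 y1 b0 b1 \<longleftrightarrow>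
     b0 = (y0 + y1 - b1) / 2 \<and> (\<forall>b. slope_obj c0 c1 (y1 - y0) b1 \<le> slope_obj c0 c1 (y1 - y0) b)"
  (is "_ \<longleftrightarrow> ?centred \<and> ?slope_min")
proof
  assume min: "is_minimizer c0 c1 y0 y1 b0 b1"
  have "pen_obj c0 c1 y0 y1 b0 b1 \<le> pen_obj c0 c1 y0 y1 ((y0 + y1 - b1) / 2) b1"
    using min unfolding is_minimizer_def by blast
  then have "(b0 - (y0 + y1 - b1) / 2)^2 \<le> 0"
    by (simp add: pen_obj_profile)
  then have centred: ?centred
    by simp
  have "slope_obj c0 c1 (y1 - y0) b1 \<le> slope_obj c0 c1 (y1 - y0) b" for b
  proof -
    have "pen_obj c0 c1 y0 y1 b0 b1 \<le> pen_obj c0 c1 y0 y1 ((y0 + y1 - b) / 2) b"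
      using min unfolding is_minimizer_def by blast
    then show ?thesis
      using centred by (simp add: pen_obj_profile)
  qed
  with centred show "?centred \<and> ?slope_min"
    by blast
next
  assume min: "?centred \<and> ?slope_min"
  show "is_minimizer c0 c1 y0 y1 b0 b1"
    unfolding is_minimizer_def pen_obj_profile
  proof (intro allI)
    fix b0' b1'
    have centred: "b0 - (y0 + y1 - b1) / 2 = 0"
      using min by simp
    have "slope_obj c0 c1 (y1 - y0) b1 \<le> slope_obj c0 c1 (y1 - y0) b1'"
      using min by blast
    then show "2 * (b0 - (y0 + y1 - b1) / 2)^2 + slope_obj c0 c1 (y1 - y0) b1
        \<le> 2 * (b0' - (y0 + y1 - b1') / 2)^2 + slope_obj c0 c1 (y1 - y0) b1'"
      unfolding centred by (simp add: add_increasing)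
  qed
qed

lemma lasso_obj_min_if_subgradient:
  assumes "\<bar>d - t\<bar> \<le> c1" and "(d - t) * t = c1 * \<bar>t\<bar>"
  shows "lasso_obj c1 d t \<le> lasso_obj c1 d b"
proof -
  have "(d - t) * b \<le> \<bar>d - t\<bar> * \<bar>b\<bar>"
    by (metis abs_ge_self abs_mult)
  also have "\<dots> \<le> c1 * \<bar>b\<bar>"
    using assms(1) by (rule mult_right_mono) simp
  finally have "(d - t) * b \<le> c1 * \<bar>b\<bar>" .
  moreover have "lasso_obj c1 d b - lasso_obj c1 d t
      = (c1 * \<bar>b\<bar> - (d - t) * b) + (b - t)^2 / 2"
    using assms(2) unfolding lasso_obj_def by (simp add: power2_eq_square field_simps)
  ultimately show ?thesis
    using zero_le_power2[of "b - t"] by linarith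
qed

lemma lasso_obj_has_min:
  assumes "c1 \<ge> 0"
  shows "\<exists>t. \<forall>b. lasso_obj c1 d t \<le> lasso_obj c1 d b"
proof -
  define t where "t = (if d > c1 then d - c1 else if d < - c1 then d + c1 else 0)"
  have "\<bar>d - t\<bar> \<le> c1" and "(d - t) * t = c1 * \<bar>t\<bar>"
    using assms by (auto simp: t_def algebra_simps)
  then show ?thesis
    using lasso_obj_min_if_subgradient by blast
qed

lemma lasso_obj_midpoint_less:
  assumes "c1 \<ge> 0" and "b \<noteq> b'"
  shows "lasso_obj c1 d ((b + b') / 2) < (lasso_obj c1 d b + lasso_obj c1 d b') / 2"
proof -
  have "c1 * \<bar>(b + b') / 2\<bar> \<le> c1 * ((\<bar>b\<bar> + \<bar>b'\<bar>) / 2)"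
    using assms(1) by (intro mult_left_mono) auto
  moreover have "(lasso_obj c1 d b + lasso_obj c1 d b') / 2 - lasso_obj c1 d ((b + b') / 2)
      = (b - b')^2 / 8 + (c1 * ((\<bar>b\<bar> + \<bar>b'\<bar>) / 2) - c1 * \<bar>(b + b') / 2\<bar>)"
    unfolding lasso_obj_def by (simp add: power2_eq_square field_simps)
  moreover have "(b - b')^2 > 0"
    using assms(2) by simp
  ultimately show ?thesis
    by linarith
qed

lemma slope_obj_has_min:
  assumes "c0 \<ge> 0" and "c1 \<ge> 0"
  shows "\<exists>b1. \<forall>b. slope_obj c0 c1 d b1 \<le> slope_obj c0 c1 d b"
proof -
  obtain t where t: "\<And>b. lasso_obj c1 d t \<le> lasso_obj c1 d b"
    using lasso_obj_has_min[OF assms(2)] by blast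
  have "min (slope_obj c0 c1 d t) (slope_obj c0 c1 d 0) \<le> slope_obj c0 c1 d b" for b
    using t[of b] assms(1) by (cases "b = 0") (auto simp: slope_obj_def)
  then show ?thesis
    by (metis min_def)
qed

lemma slope_obj_min_unique_nonzero:
  assumes "c0 \<ge> 0" and "c1 \<ge> 0"
    and "\<forall>b. slope_obj c0 c1 d a1 \<le> slope_obj c0 c1 d b" and "a1 \<noteq> 0"
    and "\<forall>b. slope_obj c0 c1 d b1 \<le> slope_obj c0 c1 d b" and "b1 \<noteq> 0"
  shows "a1 = b1"
proof (rule ccontr)
  assume "a1 \<noteq> b1"
  have "lasso_obj c1 d a1 = lasso_obj c1 d b1"
    using assms(3)[rule_format, of b1] assms(5)[rule_format, of a1] assms(4,6)
    by (simp add: slope_obj_def)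
  then have "lasso_obj c1 d ((a1 + b1) / 2) < lasso_obj c1 d a1"
    using lasso_obj_midpoint_less[OF assms(2) \<open>a1 \<noteq> b1\<close>, of d] by (simp add: field_simps)
  then have "lasso_obj c1 d ((a1 + b1) / 2) + c0 < slope_obj c0 c1 d a1"
    using assms(4) by (simp add: slope_obj_def)
  moreover have "slope_obj c0 c1 d ((a1 + b1) / 2) \<le> lasso_obj c1 d ((a1 + b1) / 2) + c0"
    using assms(1) by (simp add: slope_obj_def)
  ultimately show False
    using assms(3)[rule_format, of "(a1 + b1) / 2"] by linarith
qed

lemma selected_est_exists:
  assumes "c0 \<ge> 0" and "c1 \<ge> 0"
  shows "\<exists>b0 b1. selected_est c0 c1 y0 y1 b0 b1"
proof (cases "\<exists>b0 b1. b1 \<noteq> 0 \<and> is_minimizer c0 c1 y0 y1 b0 b1")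
  case True
  then show ?thesis
    unfolding selected_est_def by blast
next
  case False
  obtain b1 where "\<forall>b. slope_obj c0 c1 (y1 - y0) b1 \<le> slope_obj c0 c1 (y1 - y0) b"
    using slope_obj_has_min[OF assms] by blast
  then have "is_minimizer c0 c1 y0 y1 ((y0 + y1 - b1) / 2) b1"
    by (simp add: is_minimizer_iff)
  with False show ?thesis
    unfolding selected_est_def by blast
qed

lemma selected_est_unique:
  assumes "c0 \<ge> 0" and "c1 \<ge> 0"
    and a: "selected_est c0 c1 y0 y1 a0 a1" and b: "selected_est c0 c1 y0 y1 b0 b1"
  shows "a0 = b0 \<and> a1 = b1"
proof -
  have "a1 = 0 \<longleftrightarrow> b1 = 0"
    using a b unfolding selected_est_def by blast
  then have "a1 = b1"
    using slope_obj_min_unique_nonzero[OF assms(1,2)] a b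
    unfolding selected_est_def is_minimizer_iff by metis
  then show ?thesis
    using a b unfolding selected_est_def is_minimizer_iff by simp
qed

lemma selected_est_sign:
  assumes "selected_est c0 c1 y0 y1 b0 b1"
  shows "(y1 - y0) * b1 \<ge> 0"
proof -
  have "slope_obj c0 c1 (y1 - y0) b1 \<le> slope_obj c0 c1 (y1 - y0) (- b1)"
    using assms unfolding selected_est_def is_minimizer_iff by blast
  moreover have "slope_obj c0 c1 (y1 - y0) (- b1) - slope_obj c0 c1 (y1 - y0) b1 = 2 * (y1 - y0) * b1"
    unfolding slope_obj_def lasso_obj_def by (simp add: power2_eq_square field_simps)
  ultimately show ?thesis
    by linarith
qed

lemma estimator_selected:
  assumes "c0 \<ge> 0" and "c1 \<ge> 0"
  shows "selected_est c0 c1 y0 y1 (fst (estimator c0 c1 y0 y1)) (snd (estimator c0 c1 y0 y1))"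
proof -
  have "\<exists>!b. selected_est c0 c1 y0 y1 (fst b) (snd b)"
    using selected_est_exists[OF assms] selected_est_unique[OF assms]
    by (metis prod.collapse fst_conv snd_conv)
  then show ?thesis
    unfolding estimator_def by (rule theI')
qed

lemma centred_fit_truthful_report_optimal:
  fixes beta0 beta1 b1 x r :: real
  assumes "beta1 * b1 \<ge> 0" and "x \<in> {0, 1}" and "r \<in> {0, 1}"
  defines "b0 \<equiv> (beta0 + (beta0 + beta1) - b1) / 2"
  shows "(b0 + b1 * x - (beta0 + beta1 * x))^2 \<le> (b0 + b1 * r - (beta0 + beta1 * x))^2"
  using assms by (auto simp: b0_def power2_eq_square algebra_simps)

lemma pmf_eq_return_pmf_if_prob_1:
  assumes "measure_pmf.prob p {a} = 1"
  shows "p = return_pmf a"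
proof -
  have "AE e in measure_pmf p. e \<in> {a}"
    using assms by (simp add: measure_pmf.prob_eq_1)
  then show ?thesis
    by (auto simp: AE_measure_pmf_iff simp flip: set_pmf_subset_singleton)
qed

theorem claim1:
  fixes c0 c1 beta0 beta1 x r :: real
    and eps :: "(real \<times> real) pmf"
  assumes "c0 \<ge> 0" and "c1 \<ge> 0"
    and "measure_pmf.prob eps {(0, 0)} = 1"
    and "x \<in> {0, 1}" and "r \<in> {0, 1}"
  shows "measure_pmf.expectation eps (\<lambda>e. (fhat c0 c1 beta0 beta1 e x - (beta0 + beta1 * x))^2)
         \<le> measure_pmf.expectation eps (\<lambda>e. (fhat c0 c1 beta0 beta1 e r - (beta0 + beta1 * x))^2)"
proof -
  define b where "b = estimator c0 c1 beta0 (beta0 + beta1)"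
  have selected: "selected_est c0 c1 beta0 (beta0 + beta1) (fst b) (snd b)"
    unfolding b_def using estimator_selected[OF assms(1,2)] .
  have intercept: "fst b = (beta0 + (beta0 + beta1) - snd b) / 2"
    using selected unfolding selected_est_def is_minimizer_iff by blast
  have "beta1 * snd b \<ge> 0"
    using selected_est_sign[OF selected] by simp
  then have "(fst b + snd b * x - (beta0 + beta1 * x))^2 \<le> (fst b + snd b * r - (beta0 + beta1 * x))^2"
    unfolding intercept by (rule centred_fit_truthful_report_optimal[OF _ assms(4,5)])
  moreover have "fhat c0 c1 beta0 beta1 (0, 0) y = fst b + snd b * y" for y
    unfolding fhat_def b_def by (simp add: Let_def)
  ultimately show ?thesis
    by (simp add: pmf_eq_return_pmf_if_prob_1[OF assms(3)])
qed

end
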